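(* Consider a sequential adaptive allocation of subjects to $K$ treatments in which the $m$-th subject is assigned according to $\bm X_m=(X_{m,1},\ldots,X_{m,K})$ (one component equal to $1$, the others $0$), and the potential responses $\{\xi_{m,k}\}_{m\ge1}$ on treatment $k$ are i.i.d. with $\mathbb E|\xi_{m,k}|^{2+\delta}<\infty$ for some $\delta>0$, $k=1,\ldots,K$. Let $t_m$ be the (increasing) entry time of subject $m$, with $\{t_{m+1}-t_m\}$ independent, and let $r_m(k)$ be the response time of subject $m$ on treatment $k$, with $\{r_m(k);m\ge1\}$ a sequence of independent random variables for each $k$; assume that $\{t_{m+1}-t_m,\,r_m(k);k=1,\ldots,K,\,m\ge n\}$ is independent of $\bm X_1,\ldots,\bm X_n$ for every $n$. Suppose there are constants $C>0$ and $\gamma\ge2$ such that $$\mu_k(m,l):=\Pr\{r_m(k)\ge t_{m+l}-t_m\}\le C\,l^{-\gamma},\qquad m,l=1,2,\ldots,\ k=1,\ldots,K.$$ Let $S_{n,k}=\sum_{m=1}^nX_{m,k}\xi_{m,k}$ and $N_{n,k}=\sum_{m=1}^nX_{m,k}$, and let $S^{obs}_{n,k}$ and $N^{obs}_{n,k}$ be, respectively, the sum and the number of the outcomes $X_{m,k}\xi_{m,k}$ ($m\le n$) on treatment $k$ that are observed prior to the $(n+1)$-th assignment, i.e. those with $t_m+r_m(k)<t_{n+1}$. Then there exists $\delta_0$ with $0<\delta_0<\frac12-\frac1{2+\delta}$ such that $$S_{n,k}-S^{obs}_{n,k}=o(n^{1/2-\delta_0})\ \ a.s.\qquad\text{and}\qquad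 N_{n,k}-N^{obs}_{n,k}=o(n^{1/2-\delta_0})\ \ a.s.,\quad k=1,\ldots,K.$$
   Context: The outcome of subject $m$ on treatment $k$ becomes available at time $t_m+r_m(k)$; the outcome is observed only for the treatment actually assigned. The assignments $\bm X_m$ may depend on previous assignments and observed outcomes (any adaptive design). *)

theory Defs
  imports "HOL-Probability.Probability" "HOL-Library.Landau_Symbols"
begin

text \<open>Subjects are indexed by m = 1, 2, ...; treatments by k = 1..K.
  X m k: assignment indicator, xi m k: potential response, t m: entry time,
  r m k: response time of subject m on treatment k.\<close>

definition S_tot :: "(nat \<Rightarrow> nat \<Rightarrow> 'a \<Rightarrow> real) \<Rightarrow> (nat \<Rightarrow> nat \<Rightarrow> 'a \<Rightarrow> real)
    \<Rightarrow> nat \<Rightarrow> nat \<Rightarrow> 'a \<Rightarrow> real" where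
  "S_tot X xi n k \<omega> = (\<Sum>m=1..n. X m k \<omega> * xi m k \<omega>)"

definition N_tot :: "(nat \<Rightarrow> nat \<Rightarrow> 'a \<Rightarrow> real) \<Rightarrow> nat \<Rightarrow> nat \<Rightarrow> 'a \<Rightarrow> real" where
  "N_tot X n k \<omega> = (\<Sum>m=1..n. X m k \<omega>)"

definition S_obs :: "(nat \<Rightarrow> nat \<Rightarrow> 'a \<Rightarrow> real) \<Rightarrow> (nat \<Rightarrow> nat \<Rightarrow> 'a \<Rightarrow> real)
    \<Rightarrow> (nat \<Rightarrow> 'a \<Rightarrow> real) \<Rightarrow> (nat \<Rightarrow> nat \<Rightarrow> 'a \<Rightarrow> real) \<Rightarrow> nat \<Rightarrow> nat \<Rightarrow> 'a \<Rightarrow> real" where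
  "S_obs X xi t r n k \<omega> =
     (\<Sum>m=1..n. if t m \<omega> + r m k \<omega> < t (Suc n) \<omega> then X m k \<omega> * xi m k \<omega> else 0)"

definition N_obs :: "(nat \<Rightarrow> nat \<Rightarrow> 'a \<Rightarrow> real)
    \<Rightarrow> (nat \<Rightarrow> 'a \<Rightarrow> real) \<Rightarrow> (nat \<Rightarrow> nat \<Rightarrow> 'a \<Rightarrow> real) \<Rightarrow> nat \<Rightarrow> nat \<Rightarrow> 'a \<Rightarrow> real" where
  "N_obs X t r n k \<omega> =
     (\<Sum>m=1..n. if t m \<omega> + r m k \<omega> < t (Suc n) \<omega> then X m k \<omega> else 0)"

end

theory Submission
  imports Defs
begin

text \<open>Fix a treatment k, put q = 2 + \<delta>, \<eta> = (1/2 - 1/q)/8, and cut time into dyadic blocks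
  N \<le> n < 2N with N = 2^j. An outcome of a subject m \<le> n that is still missing at the (n+1)-th
  assignment belongs to an old subject (m \<le> N, delay at least t(N+1) - t m), to a subject more than
  w \<approx> N^(1/2-\<eta>) entries back (delay at least t(m+w) - t m), or to one of the last w subjects.
  Since \<gamma> \<ge> 2, Markov's inequality bounds the probability that either of the first two groups has
  N^(3\<eta>) or more members by O(N^(-\<eta>)); the q-th moment keeps all responses up to 2N below
  N^(1/q+\<eta>); and on the window, Hoeffding's inequality for responses truncated at N^(1/4), together
  with a bound on the number of responses above that level, gives a sum of order N^(1/2-\<eta>/4).
  All exceptional events have summable probabilities, so by Borel-Cantelli the differences are
  O(n^(1/2-\<eta>/4)) almost surely.\<close>

lemma sum_inverse_squares_le:
  assumes "n \<ge> 1"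
  shows "(\<Sum>l=1..n. 1 / (real l)^2) \<le> 2 - 1 / real n"
  using assms
proof (induction n rule: dec_induct)
  case base
  then show ?case by simp
next
  case (step n)
  have "1 / (real n + 1)^2 \<le> 1 / (real n * (real n + 1))"
    using step.hyps by (intro divide_left_mono) (auto simp: power2_eq_square)
  also have "\<dots> = 1 / real n - 1 / (real n + 1)"
    using step.hyps by (simp add: field_simps)
  finally show ?case
    using step.IH by (simp add: add.commute)
qed

lemma exp_neg_le_power:
  fixes y :: real
  assumes "y > 0" "k > 0"
  shows "exp (- y) \<le> (real k / y) ^ k"
proof -
  have "y / real k \<le> exp (y / real k)"
    using exp_ge_add_one_self[of "y / real k"] by linarith
  then have "(y / real k) ^ k \<le> exp (y / real k) ^ k"
    using assms by (intro power_mono) auto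
  also have "\<dots> = exp y"
    using assms by (simp flip: exp_of_nat_mult)
  finally have "1 / exp y \<le> 1 / (y / real k) ^ k"
    using assms by (intro divide_left_mono) auto
  then show ?thesis
    by (simp add: exp_minus power_divide field_simps)
qed

lemma summable_two_pow_powr:
  fixes b c :: real
  assumes "b > 0"
  shows "summable (\<lambda>j::nat. c / (2 ^ j) powr b)"
proof -
  have "(2 ^ j :: real) powr (- b) = (2 powr (- b)) ^ j" for j :: nat
    by (simp add: powr_realpow[symmetric] powr_powr mult.commute)
  moreover have "summable (\<lambda>j::nat. (2 powr (- b :: real)) ^ j)"
    using assms by (intro summable_geometric) (simp add: powr_less_one)
  ultimately show ?thesis
    by (simp add: divide_powr_uminus summable_mult)
qed

lemma sum_Un_le:
  fixes f :: "'a \<Rightarrow> 'b::ordered_ab_group_add"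
  assumes "finite A" "finite B" "\<And>x. x \<in> A \<inter> B \<Longrightarrow> f x \<ge> 0"
  shows "sum f (A \<union> B) \<le> sum f A + sum f B"
  using sum_Un[OF assms(1,2), of f] sum_nonneg[of "A \<inter> B" f] assms(3) by simp

lemma smallo_of_dyadic_bound:
  fixes f :: "nat \<Rightarrow> real"
  assumes bound: "eventually (\<lambda>j. \<forall>n. 2 ^ j \<le> n \<and> n < 2 * 2 ^ j \<longrightarrow> \<bar>f n\<bar> \<le> c * (2 ^ j) powr a)
      sequentially"
    and "0 \<le> a" "0 \<le> c" "a < b"
  shows "f \<in> o(\<lambda>n. real n powr b)"
proof -
  obtain j0 where j0: "\<And>j n. j \<ge> j0 \<Longrightarrow> 2 ^ j \<le> n \<Longrightarrow> n < 2 * 2 ^ j \<Longrightarrow> \<bar>f n\<bar> \<le> c * (2 ^ j) powr a"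
    using bound by (auto simp: eventually_sequentially)
  have "\<bar>f n\<bar> \<le> c * real n powr a" if n: "n \<ge> 2 ^ j0" for n
  proof -
    have "1 \<le> n"
      using n one_le_power[of "2::nat" j0] by linarith
    then obtain j where j: "2 ^ j \<le> n" "n < 2 ^ (j + 1)"
      using ex_power_ivl1[of 2 n] by auto
    then have "(2::nat) ^ j0 < 2 ^ (j + 1)"
      using n by linarith
    then have "j0 < j + 1"
      by (rule power_less_imp_less_exp[rotated]) simp
    then have "\<bar>f n\<bar> \<le> c * (2 ^ j) powr a"
      using j by (intro j0) auto
    also have "\<dots> \<le> c * real n powr a"
    proof -
      have "real (2 ^ j) \<le> real n"
        using j(1) by (rule of_nat_mono)
      then show ?thesis
        using assms(2,3) by (intro mult_left_mono powr_mono2) auto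
    qed
    finally show ?thesis .
  qed
  then have "f \<in> O(\<lambda>n. real n powr a)"
    by (intro bigoI[where c = c]) (auto simp: eventually_sequentially)
  also have "(\<lambda>n. real n powr a) \<in> o(\<lambda>n. real n powr b)"
    using powr_smallo_iff[of real sequentially a b] filterlim_real_sequentially assms(4) by simp
  finally show ?thesis .
qed

lemma card_subsets_le_pow:
  assumes "finite W"
  shows "card {S. S \<subseteq> W \<and> card S = J} \<le> card W ^ J"
  using n_subsets[OF assms, of J] binomial_le_pow[of J "card W"]
  by (cases "J \<le> card W") (auto simp: binomial_eq_0)

lemma card_ge_subset_UN_Inter:
  "{x\<in>A. J \<le> card {m\<in>W. x \<in> E m}} \<subseteq> (\<Union>S\<in>{S. S \<subseteq> W \<and> card S = J}. \<Inter>m\<in>S. E m)"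
proof
  fix x assume "x \<in> {x\<in>A. J \<le> card {m\<in>W. x \<in> E m}}"
  then obtain S where "S \<subseteq> {m\<in>W. x \<in> E m}" "card S = J"
    by (auto elim: obtain_subset_with_card_n)
  then show "x \<in> (\<Union>S\<in>{S. S \<subseteq> W \<and> card S = J}. \<Inter>m\<in>S. E m)"
    by blast
qed

lemma card_filter_eq_sum_indicator:
  assumes "finite F"
  shows "real (card {m\<in>F. x \<in> E m}) = (\<Sum>m\<in>F. indicator (E m) x)"
  using assms by (simp add: indicator_def Int_def)

context prob_space
begin

lemma prob_card_ge_le:
  assumes F: "finite F" and E: "\<And>m. m \<in> F \<Longrightarrow> E m \<in> events" and c: "c > 0"
  shows "prob {\<omega>\<in>space M. c \<le> real (card {m\<in>F. \<omega> \<in> E m})} \<le> (\<Sum>m\<in>F. prob (E m)) / c"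
proof -
  have int: "integrable M (\<lambda>\<omega>. \<Sum>m\<in>F. indicator (E m) \<omega> :: real)"
    using E by (intro Bochner_Integration.integrable_sum integrable_real_indicator)
      (auto simp: emeasure_eq_measure)
  have "prob {\<omega>\<in>space M. c \<le> (\<Sum>m\<in>F. indicator (E m) \<omega>)} \<le> (\<integral>\<omega>. (\<Sum>m\<in>F. indicator (E m) \<omega>) \<partial>M) / c"
    by (rule integral_Markov_inequality_measure[OF int _ _ c, where A = "space M"])
      (auto intro!: sum_nonneg)
  also have "(\<integral>\<omega>. (\<Sum>m\<in>F. indicator (E m) \<omega> :: real) \<partial>M) = (\<Sum>m\<in>F. prob (E m))"
    using E by (subst Bochner_Integration.integral_sum)
      (auto intro!: integrable_real_indicator simp: emeasure_eq_measure)
  finally show ?thesis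
    unfolding card_filter_eq_sum_indicator[OF F] .
qed

lemma prob_Inter_indep_le:
  assumes "indep_events E I" "S \<subseteq> I" "finite S" "S \<noteq> {}" "\<And>m. m \<in> S \<Longrightarrow> prob (E m) \<le> p"
  shows "prob (\<Inter>m\<in>S. E m) \<le> p ^ card S"
proof -
  have "prob (\<Inter>m\<in>S. E m) = (\<Prod>m\<in>S. prob (E m))"
    using assms(1-4) unfolding indep_events_def by blast
  also have "\<dots> \<le> (\<Prod>m\<in>S. p)"
    using assms(5) by (intro prod_mono) auto
  finally show ?thesis
    by simp
qed

lemma prob_card_ge_indep_le:
  assumes indep: "indep_events E I" and W: "W \<subseteq> I" "finite W" and J: "J \<ge> 1"
    and p: "\<And>m. m \<in> W \<Longrightarrow> prob (E m) \<le> p" "p \<ge> 0"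
  shows "prob {\<omega>\<in>space M. J \<le> card {m\<in>W. \<omega> \<in> E m}} \<le> (real (card W) * p) ^ J"
proof -
  let ?F = "{S. S \<subseteq> W \<and> card S = J}"
  have F_fin: "finite ?F"
    using W(2) by (rule finite_subset[rotated, OF finite_Pow_iff[THEN iffD2]]) auto
  have S: "S \<subseteq> I" "finite S" "S \<noteq> {}" if "S \<in> ?F" for S
    using that W J by (auto intro: finite_subset)
  have Inter_sets: "(\<Inter>m\<in>S. E m) \<in> events" if "S \<in> ?F" for S
    using S[OF that] indep by (intro sets.finite_INT) (auto simp: indep_events_def)
  have "(\<Union>S\<in>?F. \<Inter>m\<in>S. E m) \<in> events"
    using F_fin Inter_sets by (rule sets.finite_UN)
  with card_ge_subset_UN_Inter
  have "prob {\<omega>\<in>space M. J \<le> card {m\<in>W. \<omega> \<in> E m}} \<le> prob (\<Union>S\<in>?F. \<Inter>m\<in>S. E m)"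
    by (rule finite_measure_mono)
  also have "\<dots> \<le> (\<Sum>S\<in>?F. prob (\<Inter>m\<in>S. E m))"
    using Inter_sets by (intro finite_measure_subadditive_finite[OF F_fin]) blast
  also have "\<dots> \<le> real (card ?F) * p ^ J"
  proof (rule sum_bounded_above)
    fix S assume "S \<in> ?F"
    then show "prob (\<Inter>m\<in>S. E m) \<le> p ^ J"
      using prob_Inter_indep_le[OF indep S[OF \<open>S \<in> ?F\<close>]] p(1) by auto
  qed
  also have "\<dots> \<le> real (card W) ^ J * p ^ J"
  proof -
    have "real (card ?F) \<le> real (card W) ^ J"
      using card_subsets_le_pow[OF W(2), of J] by (metis of_nat_le_iff of_nat_power)
    then show ?thesis
      using p(2) by (intro mult_right_mono) auto
  qed
  finally show ?thesis
    by (simp add: power_mult_distrib)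
qed

lemma prob_sum_min_abs_ge_le:
  assumes indep: "indep_vars (\<lambda>_. borel) Z I" and W: "W \<subseteq> I" "finite W" "W \<noteq> {}"
    and distr: "\<And>m. m \<in> W \<Longrightarrow> distr M borel (Z m) = distr M borel Z0"
    and Z0: "Z0 \<in> borel_measurable M" and lam: "lam > 0" and x: "x \<ge> 0"
  shows "prob {\<omega>\<in>space M. real (card W) * expectation (\<lambda>\<omega>. min \<bar>Z0 \<omega>\<bar> lam) + x
            \<le> (\<Sum>m\<in>W. min \<bar>Z m \<omega>\<bar> lam)} \<le> exp (- 2 * x\<^sup>2 / (real (card W) * lam\<^sup>2))"
proof -
  let ?f = "\<lambda>y::real. min \<bar>y\<bar> lam"
  have f: "?f \<in> borel_measurable borel"
    by measurable
  have Z: "Z m \<in> borel_measurable M" if "m \<in> I" for m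
    using indep that unfolding indep_vars_def2 by auto
  have "distr M borel (\<lambda>\<omega>. ?f (Z m \<omega>)) = distr M borel (\<lambda>\<omega>. ?f (Z0 \<omega>))" if m: "m \<in> W" for m
  proof -
    have "distr M borel (\<lambda>\<omega>. ?f (Z m \<omega>)) = distr (distr M borel (Z m)) borel ?f"
      using m W Z f by (subst distr_distr) (auto simp: comp_def)
    also have "\<dots> = distr (distr M borel Z0) borel ?f"
      using distr[OF m] by simp
    also have "\<dots> = distr M borel (\<lambda>\<omega>. ?f (Z0 \<omega>))"
      using Z0 f by (subst distr_distr) (auto simp: comp_def)
    finally show ?thesis .
  qed
  moreover have "indep_vars (\<lambda>_. borel) (\<lambda>m \<omega>. ?f (Z m \<omega>)) W"
    using indep_vars_subset[OF indep W(1)] f by (rule indep_vars_compose2)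
  ultimately interpret Hoeffding_ineq_iid M W "\<lambda>m \<omega>. ?f (Z m \<omega>)" "\<lambda>\<omega>. ?f (Z0 \<omega>)" 0 lam
    "expectation (\<lambda>\<omega>. ?f (Z0 \<omega>))"
    using W(2) Z0 lam by unfold_locales auto
  show ?thesis
    using Hoeffding_ineq_ge[OF x lam W(3)] by simp
qed

lemma prob_abs_gt_le_moment:
  assumes Z: "Z \<in> borel_measurable M" "distr M borel Z = distr M borel Z0"
    and Z0: "Z0 \<in> borel_measurable M" "integrable M (\<lambda>\<omega>. \<bar>Z0 \<omega>\<bar> powr q)"
    and q: "q > 0" and b: "b > 0"
  shows "prob {\<omega>\<in>space M. b < \<bar>Z \<omega>\<bar>} \<le> (\<integral>\<omega>. \<bar>Z0 \<omega>\<bar> powr q \<partial>M) / b powr q"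
proof -
  have B: "{y::real. b < \<bar>y\<bar>} \<in> sets borel"
    by measurable
  have "prob {\<omega>\<in>space M. b < \<bar>Z \<omega>\<bar>} = measure (distr M borel Z) {y. b < \<bar>y\<bar>}"
    using B Z(1) by (subst measure_distr) (auto intro!: arg_cong[where f = prob])
  also have "\<dots> = measure (distr M borel Z0) {y. b < \<bar>y\<bar>}"
    using Z(2) by simp
  also have "\<dots> = prob {\<omega>\<in>space M. b < \<bar>Z0 \<omega>\<bar>}"
    using B Z0(1) by (subst measure_distr) (auto intro!: arg_cong[where f = prob])
  also have "\<dots> \<le> prob {\<omega>\<in>space M. b powr q \<le> \<bar>Z0 \<omega>\<bar> powr q}"
    using b q Z0(1) by (intro finite_measure_mono) (auto intro!: powr_mono2)
  also have "\<dots> \<le> (\<integral>\<omega>. \<bar>Z0 \<omega>\<bar> powr q \<partial>M) / b powr q"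
    using b by (intro integral_Markov_inequality_measure[OF Z0(2), where A = "space M"]) auto
  finally show ?thesis .
qed

lemma AE_eventually_not_in:
  assumes "\<And>j. E j \<in> events" "summable (\<lambda>j. prob (E j))"
  shows "AE \<omega> in M. eventually (\<lambda>j. \<omega> \<notin> E j) sequentially"
proof -
  have "AE \<omega> in M. eventually (\<lambda>j. \<omega> \<in> space M - E j) sequentially"
    using assms by (intro borel_cantelli_AE1) (auto simp: emeasure_eq_measure)
  then show ?thesis
    by (auto elim!: eventually_mono)
qed

end

definition unobserved :: "(nat \<Rightarrow> 'a \<Rightarrow> real) \<Rightarrow> (nat \<Rightarrow> nat \<Rightarrow> 'a \<Rightarrow> real) \<Rightarrow> nat \<Rightarrow> nat \<Rightarrow> 'a \<Rightarrow> nat set"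
  where "unobserved t r n k \<omega> = {m\<in>{1..n}. t (Suc n) \<omega> \<le> t m \<omega> + r m k \<omega>}"

lemma S_tot_minus_S_obs:
  "S_tot X xi n k \<omega> - S_obs X xi t r n k \<omega> = (\<Sum>m\<in>unobserved t r n k \<omega>. X m k \<omega> * xi m k \<omega>)"
proof -
  have "S_tot X xi n k \<omega> - S_obs X xi t r n k \<omega> =
      (\<Sum>m\<in>{1..n}. if t (Suc n) \<omega> \<le> t m \<omega> + r m k \<omega> then X m k \<omega> * xi m k \<omega> else 0)"
    unfolding S_tot_def S_obs_def by (auto simp: sum_subtractf[symmetric] intro!: sum.cong)
  also have "\<dots> = (\<Sum>m\<in>unobserved t r n k \<omega>. X m k \<omega> * xi m k \<omega>)"
    unfolding unobserved_def by (rule sum.inter_filter[symmetric]) simp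
  finally show ?thesis .
qed

lemma N_tot_minus_N_obs:
  "N_tot X n k \<omega> - N_obs X t r n k \<omega> = (\<Sum>m\<in>unobserved t r n k \<omega>. X m k \<omega>)"
proof -
  have "N_tot X n k \<omega> - N_obs X t r n k \<omega> =
      (\<Sum>m\<in>{1..n}. if t (Suc n) \<omega> \<le> t m \<omega> + r m k \<omega> then X m k \<omega> else 0)"
    unfolding N_tot_def N_obs_def by (auto simp: sum_subtractf[symmetric] intro!: sum.cong)
  also have "\<dots> = (\<Sum>m\<in>unobserved t r n k \<omega>. X m k \<omega>)"
    unfolding unobserved_def by (rule sum.inter_filter[symmetric]) simp
  finally show ?thesis .
qed

lemma unobserved_subset:
  assumes mono: "\<And>m. m \<ge> 1 \<Longrightarrow> t m \<omega> \<le> t (Suc m) \<omega>" and "a \<le> n"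
  shows "unobserved t r n k \<omega> \<subseteq>
      {m\<in>{1..a}. t (Suc a) \<omega> - t m \<omega> \<le> r m k \<omega>} \<union>
      {m\<in>{a<..n}. t (m + w) \<omega> - t m \<omega> \<le> r m k \<omega>} \<union> {m\<in>{1..n}. n < m + w}"
proof
  have t_le: "t i \<omega> \<le> t i' \<omega>" if "1 \<le> i" "i \<le> i'" for i i'
    by (rule lift_Suc_mono_le_ivl[where N = "{1..}" and f = "\<lambda>i. t i \<omega>"]) (use mono that in auto)
  fix m assume "m \<in> unobserved t r n k \<omega>"
  then have m: "1 \<le> m" "m \<le> n" and late: "t (Suc n) \<omega> \<le> t m \<omega> + r m k \<omega>"
    unfolding unobserved_def by auto
  consider "m \<le> a" | "a < m" "m + w \<le> n" | "n < m + w"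
    by linarith
  then show "m \<in> {m\<in>{1..a}. t (Suc a) \<omega> - t m \<omega> \<le> r m k \<omega>} \<union>
      {m\<in>{a<..n}. t (m + w) \<omega> - t m \<omega> \<le> r m k \<omega>} \<union> {m\<in>{1..n}. n < m + w}"
  proof cases
    case 1
    have "t (Suc a) \<omega> \<le> t (Suc n) \<omega>"
      using assms(2) by (intro t_le) auto
    then have "t (Suc a) \<omega> - t m \<omega> \<le> r m k \<omega>"
      using late by linarith
    then show ?thesis
      using 1 m(1) by simp
  next
    case 2
    have "t (m + w) \<omega> \<le> t (Suc n) \<omega>"
      using 2 m by (intro t_le) auto
    then have "t (m + w) \<omega> - t m \<omega> \<le> r m k \<omega>"
      using late by linarith
    then show ?thesis
      using 2 m(2) by simp
  next
    case 3
    then show ?thesis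
      using m by simp
  qed
qed

locale delayed_response = prob_space M for M :: "'a measure" +
  fixes k :: nat and X xi :: "nat \<Rightarrow> nat \<Rightarrow> 'a \<Rightarrow> real"
    and t :: "nat \<Rightarrow> 'a \<Rightarrow> real" and r :: "nat \<Rightarrow> nat \<Rightarrow> 'a \<Rightarrow> real" and q C \<gamma> :: real
  assumes X_01: "\<And>m \<omega>. m \<ge> 1 \<Longrightarrow> \<omega> \<in> space M \<Longrightarrow> X m k \<omega> \<in> {0, 1}"
    and xi_rv[measurable]: "\<And>m. xi m k \<in> borel_measurable M"
    and xi_indep: "indep_vars (\<lambda>_. borel) (\<lambda>m. xi m k) {1..}"
    and xi_ident: "\<And>m. m \<ge> 1 \<Longrightarrow> distr M borel (xi m k) = distr M borel (xi 1 k)"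
    and q_gt_2: "q > 2"
    and xi_moment: "integrable M (\<lambda>\<omega>. \<bar>xi 1 k \<omega>\<bar> powr q)"
    and t_rv[measurable]: "\<And>m. t m \<in> borel_measurable M"
    and t_incr: "\<And>m \<omega>. m \<ge> 1 \<Longrightarrow> \<omega> \<in> space M \<Longrightarrow> t m \<omega> \<le> t (Suc m) \<omega>"
    and r_rv[measurable]: "\<And>m. r m k \<in> borel_measurable M"
    and \<gamma>_ge_2: "\<gamma> \<ge> 2"
    and late_bound: "\<And>m l. m \<ge> 1 \<Longrightarrow> l \<ge> 1 \<Longrightarrow>
          prob {\<omega>\<in>space M. t (m + l) \<omega> - t m \<omega> \<le> r m k \<omega>} \<le> C * real l powr (- \<gamma>)"
begin

definition "\<eta> = (1/2 - 1/q) / 8"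
definition scale :: "nat \<Rightarrow> real" where "scale j = 2 ^ j"
definition width :: "nat \<Rightarrow> nat" where "width j = nat \<lceil>scale j powr (1/2 - \<eta>)\<rceil>"
definition level :: "nat \<Rightarrow> real" where "level j = scale j powr (1/4)"
definition cap :: "nat \<Rightarrow> real" where "cap j = scale j powr (1/q + \<eta>)"
definition "exceed_count = nat \<lceil>2 / \<eta>\<rceil>"
definition "moment = (\<integral>\<omega>. \<bar>xi 1 k \<omega>\<bar> powr q \<partial>M)"
definition trunc_mean :: "nat \<Rightarrow> real"
  where "trunc_mean j = expectation (\<lambda>\<omega>. min \<bar>xi 1 k \<omega>\<bar> (level j))"
definition window :: "nat \<Rightarrow> nat \<Rightarrow> nat set" where "window j n = {m\<in>{1..n}. n < m + width j}"

definition "late_old j m = {\<omega>\<in>space M. t (Suc (2 ^ j)) \<omega> - t m \<omega> \<le> r m k \<omega>}"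
definition "late_recent j m = {\<omega>\<in>space M. t (m + width j) \<omega> - t m \<omega> \<le> r m k \<omega>}"
definition "many_late_old j =
  {\<omega>\<in>space M. scale j powr (3 * \<eta>) \<le> real (card {m\<in>{1..2 ^ j}. \<omega> \<in> late_old j m})}"
definition "many_late_recent j =
  {\<omega>\<in>space M. scale j powr (3 * \<eta>) \<le> real (card {m\<in>{2 ^ j<..<2 * 2 ^ j}. \<omega> \<in> late_recent j m})}"
definition "large_response j = (\<Union>m\<in>{1..2 * 2 ^ j}. {\<omega>\<in>space M. cap j < \<bar>xi m k \<omega>\<bar>})"
definition "large_window_sum j = (\<Union>n\<in>{2 ^ j..<2 * 2 ^ j}. {\<omega>\<in>space M.
    real (card (window j n)) * trunc_mean j + scale j powr (1/2 - \<eta>/4)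
      \<le> (\<Sum>m\<in>window j n. min \<bar>xi m k \<omega>\<bar> (level j))})"
definition "exceeds j m = {\<omega>\<in>space M. level j < \<bar>xi m k \<omega>\<bar>}"
definition "many_exceed j = (\<Union>n\<in>{2 ^ j..<2 * 2 ^ j}.
    {\<omega>\<in>space M. exceed_count \<le> card {m\<in>window j n. \<omega> \<in> exceeds j m}})"
definition "bad j = many_late_old j \<union> many_late_recent j \<union> large_response j \<union>
    large_window_sum j \<union> many_exceed j"

lemma eta_pos: "\<eta> > 0"
  using q_gt_2 by (simp add: \<eta>_def field_simps)

lemma inverse_q_eq: "1/q = 1/2 - 8 * \<eta>"
  using q_gt_2 by (simp add: \<eta>_def field_simps)

lemma eta_less: "\<eta> < 1/16"
  using q_gt_2 by (simp add: \<eta>_def field_simps)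

lemma scale_pos: "scale j > 0" and scale_ge_1: "scale j \<ge> 1"
  by (simp_all add: scale_def)

lemma scale_neq_0[simp]: "scale j \<noteq> 0"
  using scale_pos[of j] by simp

lemma scale_powr_mono: "a \<le> b \<Longrightarrow> scale j powr a \<le> scale j powr b"
  using scale_ge_1 by (intro powr_mono)

lemma scale_powr_ge_1: "a \<ge> 0 \<Longrightarrow> scale j powr a \<ge> 1"
  using scale_ge_1 by (rule ge_one_powr_ge_zero)

lemma C_nonneg: "C \<ge> 0"
proof -
  have "0 \<le> prob {\<omega>\<in>space M. t (1 + 1) \<omega> - t 1 \<omega> \<le> r 1 k \<omega>}"
    by (rule measure_nonneg)
  also have "\<dots> \<le> C * real 1 powr (- \<gamma>)"
    by (rule late_bound) auto
  finally show ?thesis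
    by simp
qed

lemma prob_late_le:
  assumes "m \<ge> 1" "l \<ge> 1"
  shows "prob {\<omega>\<in>space M. t (m + l) \<omega> - t m \<omega> \<le> r m k \<omega>} \<le> C / (real l)\<^sup>2"
proof -
  have "real l powr (- \<gamma>) \<le> real l powr (- 2)"
    using assms(2) \<gamma>_ge_2 by (intro powr_mono) auto
  also have "\<dots> = 1 / (real l)\<^sup>2"
    using assms(2) by (simp add: powr_minus_divide powr_numeral)
  finally have "C * real l powr (- \<gamma>) \<le> C / (real l)\<^sup>2"
    using C_nonneg by (simp add: mult_left_mono divide_inverse)
  then show ?thesis
    using late_bound[OF assms] by linarith
qed

lemma moment_nonneg: "moment \<ge> 0"
  unfolding moment_def by (intro integral_nonneg_AE) auto

lemma width_bounds: "scale j powr (1/2 - \<eta>) \<le> real (width j)" "real (width j) \<le> 2 * scale j powr (1/2 - \<eta>)"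
proof -
  let ?x = "scale j powr (1/2 - \<eta>)"
  have x: "1 \<le> ?x"
    using eta_less by (intro scale_powr_ge_1) simp
  then have "real (width j) = of_int \<lceil>?x\<rceil>"
    unfolding width_def by simp
  then show "?x \<le> real (width j)" "real (width j) \<le> 2 * ?x"
    using le_of_int_ceiling[of ?x] of_int_ceiling_le_add_one[of ?x] x by linarith+
qed

lemma width_ge_1: "width j \<ge> 1"
  using width_bounds(1)[of j] scale_powr_ge_1[of "1/2 - \<eta>" j] eta_less by linarith

lemma card_window_le: "real (card (window j n)) \<le> 2 * scale j powr (1/2 - \<eta>)"
proof -
  have "card (window j n) \<le> card {n + 1 - width j..n}"
    unfolding window_def by (intro card_mono) auto
  then have "card (window j n) \<le> width j"
    by simp
  then show ?thesis
    using width_bounds(2)[of j] by linarith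
qed

lemma window_subset: "window j n \<subseteq> {1..n}"
  by (auto simp: window_def)

lemma finite_window[simp]: "finite (window j n)"
  by (simp add: window_def)

lemma window_nonempty: "n \<ge> 1 \<Longrightarrow> window j n \<noteq> {}"
  using width_ge_1[of j] by (auto simp: window_def)

lemma exceed_count_ge_1: "exceed_count \<ge> 1" and eta_exceed_count: "\<eta> * real exceed_count \<ge> 2"
proof -
  have "real exceed_count \<ge> 2 / \<eta>"
    unfolding exceed_count_def by linarith
  then show "\<eta> * real exceed_count \<ge> 2"
    using eta_pos by (simp add: field_simps)
  then show "exceed_count \<ge> 1"
    using eta_pos by (cases exceed_count) auto
qed

lemma late_old_sets[measurable]: "late_old j m \<in> events"
  unfolding late_old_def by measurable

lemma late_recent_sets[measurable]: "late_recent j m \<in> events"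
  unfolding late_recent_def by measurable

lemma prob_late_old:
  assumes "m \<in> {1..2 ^ j}"
  shows "prob (late_old j m) \<le> C / (real (Suc (2 ^ j) - m))\<^sup>2"
proof -
  define l where "l = Suc (2 ^ j) - m"
  have "l \<ge> 1" "m + l = Suc (2 ^ j)"
    using assms by (auto simp: l_def)
  then show ?thesis
    unfolding late_old_def l_def[symmetric] using assms prob_late_le[of m l] by auto
qed

lemma prob_many_late_old: "prob (many_late_old j) \<le> 2 * C / scale j powr (3 * \<eta>)"
proof -
  have "prob (many_late_old j) \<le> (\<Sum>m\<in>{1..2 ^ j}. prob (late_old j m)) / scale j powr (3 * \<eta>)"
    unfolding many_late_old_def by (rule prob_card_ge_le) auto
  also have "(\<Sum>m\<in>{1..2 ^ j}. prob (late_old j m)) \<le> (\<Sum>m\<in>{1..2 ^ j}. C / (real (Suc (2 ^ j) - m))\<^sup>2)"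
    by (intro sum_mono prob_late_old)
  also have "\<dots> = C * (\<Sum>l=1..2 ^ j. 1 / (real l)\<^sup>2)"
    by (subst sum.atLeastAtMost_rev)
      (auto simp: sum_distrib_left intro!: sum.cong simp del: of_nat_diff)
  also have "\<dots> \<le> C * 2"
  proof -
    have "(\<Sum>l=1..2 ^ j. 1 / (real l)\<^sup>2) \<le> 2 - 1 / real (2 ^ j)"
      by (rule sum_inverse_squares_le) simp
    also have "\<dots> \<le> 2"
      by simp
    finally show ?thesis
      using C_nonneg by (intro mult_left_mono)
  qed
  finally show ?thesis
    using scale_pos[of j] by (simp add: divide_right_mono mult.commute)
qed

lemma prob_late_recent:
  assumes "m \<ge> 1"
  shows "prob (late_recent j m) \<le> C / scale j powr (1 - 2 * \<eta>)"
proof -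
  have "prob (late_recent j m) \<le> C / (real (width j))\<^sup>2"
    unfolding late_recent_def using prob_late_le[OF assms width_ge_1] .
  also have "\<dots> \<le> C / (scale j powr (1/2 - \<eta>))\<^sup>2"
    using width_bounds(1)[of j] width_ge_1[of j] C_nonneg scale_pos[of j]
    by (intro divide_left_mono power_mono mult_pos_pos) auto
  also have "(scale j powr (1/2 - \<eta>))\<^sup>2 = scale j powr (1 - 2 * \<eta>)"
    by (simp add: power2_eq_square powr_add[symmetric])
  finally show ?thesis .
qed

lemma prob_many_late_recent: "prob (many_late_recent j) \<le> C / scale j powr \<eta>"
proof -
  have "prob (many_late_recent j)
      \<le> (\<Sum>m\<in>{2 ^ j<..<2 * 2 ^ j}. prob (late_recent j m)) / scale j powr (3 * \<eta>)"
    unfolding many_late_recent_def by (rule prob_card_ge_le) auto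
  also have "(\<Sum>m\<in>{2 ^ j<..<2 * 2 ^ j}. prob (late_recent j m))
      \<le> real (card {2 ^ j<..<2 * 2 ^ j :: nat}) * (C / scale j powr (1 - 2 * \<eta>))"
    by (intro sum_bounded_above prob_late_recent) auto
  also have "\<dots> \<le> scale j * (C / scale j powr (1 - 2 * \<eta>))"
    using C_nonneg by (intro mult_right_mono) (auto simp: scale_def)
  also have "\<dots> = C * scale j powr (2 * \<eta>)"
    using scale_pos[of j] by (simp add: powr_diff[of _ 1, simplified])
  finally have "prob (many_late_recent j) \<le> C * scale j powr (2 * \<eta>) / scale j powr (3 * \<eta>)"
    using scale_pos[of j] by (simp add: divide_right_mono)
  also have "scale j powr (3 * \<eta>) = scale j powr (2 * \<eta>) * scale j powr \<eta>"
    unfolding powr_add[symmetric] by simp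
  finally show ?thesis
    by simp
qed

lemma prob_abs_xi_gt:
  assumes "m \<ge> 1" "b > 0"
  shows "prob {\<omega>\<in>space M. b < \<bar>xi m k \<omega>\<bar>} \<le> moment / b powr q"
  unfolding moment_def using xi_ident[OF assms(1)] xi_moment q_gt_2 assms(2)
  by (intro prob_abs_gt_le_moment) auto

lemma prob_large_response: "prob (large_response j) \<le> 2 * moment / scale j powr (q * \<eta>)"
proof -
  have "prob (large_response j) \<le> (\<Sum>m\<in>{1..2 * 2 ^ j}. prob {\<omega>\<in>space M. cap j < \<bar>xi m k \<omega>\<bar>})"
    unfolding large_response_def by (rule finite_measure_subadditive_finite) auto
  also have "\<dots> \<le> (\<Sum>m\<in>{1..2 * 2 ^ j :: nat}. moment / cap j powr q)"
    by (intro sum_mono prob_abs_xi_gt) (auto simp: cap_def)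
  also have "\<dots> = 2 * scale j * moment / (scale j * scale j powr (q * \<eta>))"
  proof -
    have "(1/q + \<eta>) * q = 1 + q * \<eta>"
      using q_gt_2 by (simp add: field_simps)
    then have "cap j powr q = scale j powr (1 + q * \<eta>)"
      unfolding cap_def powr_powr by simp
    also have "\<dots> = scale j * scale j powr (q * \<eta>)"
      using scale_pos[of j] by (simp add: powr_mult_base)
    finally have "cap j powr q = scale j * scale j powr (q * \<eta>)" .
    then show ?thesis
      by (simp add: scale_def)
  qed
  finally show ?thesis
    by simp
qed

lemma exceeds_sets[measurable]: "exceeds j m \<in> events"
  unfolding exceeds_def by measurable

lemma prob_block_union_le:
  fixes A :: "nat \<Rightarrow> 'a set"
  assumes "\<And>n. A n \<in> events" "\<And>n. n \<in> {2 ^ j..<2 * 2 ^ j} \<Longrightarrow> prob (A n) \<le> c / scale j powr 2"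
  shows "prob (\<Union>n\<in>{2 ^ j..<2 * 2 ^ j}. A n) \<le> c / scale j"
proof -
  have "prob (\<Union>n\<in>{2 ^ j..<2 * 2 ^ j}. A n) \<le> (\<Sum>n\<in>{2 ^ j..<2 * 2 ^ j}. prob (A n))"
    using assms(1) by (intro finite_measure_subadditive_finite) auto
  also have "\<dots> \<le> real (card {2 ^ j..<2 * 2 ^ j :: nat}) * (c / scale j powr 2)"
    using assms(2) by (rule sum_bounded_above)
  also have "\<dots> = c / scale j"
    by (simp add: scale_def powr_numeral power2_eq_square)
  finally show ?thesis .
qed

lemma prob_window_exceed:
  "prob {\<omega>\<in>space M. exceed_count \<le> card {m\<in>window j n. \<omega> \<in> exceeds j m}}
    \<le> (2 * moment) ^ exceed_count / scale j powr 2"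
proof -
  let ?p = "moment / level j powr q"
  have indep: "indep_events (exceeds j) {1..}"
    unfolding exceeds_def by (rule indep_eventsI_indep_vars[OF xi_indep]) auto
  have "prob {\<omega>\<in>space M. exceed_count \<le> card {m\<in>window j n. \<omega> \<in> exceeds j m}}
      \<le> (real (card (window j n)) * ?p) ^ exceed_count"
  proof (rule prob_card_ge_indep_le[OF indep _ _ exceed_count_ge_1])
    fix m assume "m \<in> window j n"
    then show "prob (exceeds j m) \<le> ?p"
      unfolding exceeds_def by (intro prob_abs_xi_gt) (auto simp: window_def level_def)
  qed (use moment_nonneg window_subset[of j n] in auto)
  also have "\<dots> \<le> (2 * moment / scale j powr \<eta>) ^ exceed_count"
  proof (rule power_mono)
    have "real (card (window j n)) * ?p \<le> 2 * scale j powr (1/2 - \<eta>) * ?p"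
      using card_window_le moment_nonneg by (intro mult_right_mono) auto
    also have "\<dots> = 2 * moment * scale j powr (1/2 - \<eta> - q / 4)"
      by (simp add: level_def powr_powr powr_diff)
    also have "\<dots> \<le> 2 * moment * scale j powr (- \<eta>)"
      using moment_nonneg q_gt_2 by (intro mult_left_mono scale_powr_mono) auto
    finally show "real (card (window j n)) * ?p \<le> 2 * moment / scale j powr \<eta>"
      by (simp add: divide_powr_uminus)
  qed (use moment_nonneg in simp)
  also have "\<dots> = (2 * moment) ^ exceed_count / scale j powr (\<eta> * real exceed_count)"
    by (simp add: power_divide powr_power mult.commute)
  also have "\<dots> \<le> (2 * moment) ^ exceed_count / scale j powr 2"
    using eta_exceed_count moment_nonneg by (intro divide_left_mono scale_powr_mono) auto
  finally show ?thesis .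
qed

lemma prob_many_exceed: "prob (many_exceed j) \<le> (2 * moment) ^ exceed_count / scale j"
  unfolding many_exceed_def
proof (rule prob_block_union_le)
  show "{\<omega>\<in>space M. exceed_count \<le> card {m\<in>window j n. \<omega> \<in> exceeds j m}} \<in> events" for n
    by measurable
qed (rule prob_window_exceed)

lemma level_pos: "level j > 0"
  by (simp add: level_def)

lemma trunc_mean_bounds: "0 \<le> trunc_mean j" "trunc_mean j \<le> 1 + moment"
proof -
  have int: "integrable M (\<lambda>\<omega>. min \<bar>xi 1 k \<omega>\<bar> (level j))"
    by (rule integrable_const_bound[where B = "level j"]) (use level_pos[of j] in auto)
  show "0 \<le> trunc_mean j"
    unfolding trunc_mean_def by (intro integral_nonneg_AE) (use level_pos[of j] in auto)
  have "min \<bar>xi 1 k \<omega>\<bar> (level j) \<le> 1 + \<bar>xi 1 k \<omega>\<bar> powr q" for \<omega>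
  proof (cases "\<bar>xi 1 k \<omega>\<bar> \<le> 1")
    case False
    then have "\<bar>xi 1 k \<omega>\<bar> powr 1 \<le> \<bar>xi 1 k \<omega>\<bar> powr q"
      using q_gt_2 by (intro powr_mono) auto
    then show ?thesis
      using False by simp
  qed (simp add: add_increasing2)
  then have "trunc_mean j \<le> (\<integral>\<omega>. 1 + \<bar>xi 1 k \<omega>\<bar> powr q \<partial>M)"
    unfolding trunc_mean_def using int xi_moment by (intro integral_mono) auto
  also have "\<dots> = 1 + moment"
    using xi_moment by (simp add: moment_def prob_space)
  finally show "trunc_mean j \<le> 1 + moment" .
qed

lemma Hoeffding_exponent_ge:
  assumes "window j n \<noteq> {}"
  shows "scale j powr (\<eta>/2)
    \<le> 2 * (scale j powr (1/2 - \<eta>/4))\<^sup>2 / (real (card (window j n)) * (level j)\<^sup>2)"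
proof -
  have level_sq: "(level j)\<^sup>2 = scale j powr (1/2)"
    by (simp add: level_def power2_eq_square powr_add[symmetric])
  have "real (card (window j n)) * (level j)\<^sup>2 \<le> 2 * scale j powr (1/2 - \<eta>) * scale j powr (1/2)"
    unfolding level_sq using card_window_le by (intro mult_right_mono) auto
  also have "\<dots> = 2 * scale j powr (1 - \<eta>)"
    by (simp add: powr_add[symmetric])
  finally have den: "real (card (window j n)) * (level j)\<^sup>2 \<le> 2 * scale j powr (1 - \<eta>)" .
  have "scale j powr (\<eta>/2) = 2 * (scale j powr (1/2 - \<eta>/4))\<^sup>2 / (2 * scale j powr (1 - \<eta>))"
    by (simp add: power2_eq_square powr_add[symmetric] powr_diff[symmetric])
  also have "\<dots> \<le> 2 * (scale j powr (1/2 - \<eta>/4))\<^sup>2 / (real (card (window j n)) * (level j)\<^sup>2)"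
    using den assms level_pos[of j] by (intro divide_left_mono) (auto simp: card_gt_0_iff)
  finally show ?thesis .
qed

lemma prob_window_sum_ge:
  assumes "n \<ge> 1"
  shows "prob {\<omega>\<in>space M. real (card (window j n)) * trunc_mean j + scale j powr (1/2 - \<eta>/4)
      \<le> (\<Sum>m\<in>window j n. min \<bar>xi m k \<omega>\<bar> (level j))}
    \<le> real (2 * exceed_count) ^ (2 * exceed_count) / scale j powr 2"
proof -
  let ?x = "scale j powr (1/2 - \<eta>/4)"
  let ?c = "real (2 * exceed_count) ^ (2 * exceed_count)"
  have W: "window j n \<noteq> {}" "window j n \<subseteq> {1..}"
    using window_nonempty[OF assms] window_subset[of j n] by auto
  have ident: "distr M borel (xi m k) = distr M borel (xi 1 k)" if "m \<in> window j n" for m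
    using that W(2) by (intro xi_ident) auto
  have "prob {\<omega>\<in>space M. real (card (window j n)) * trunc_mean j + ?x
      \<le> (\<Sum>m\<in>window j n. min \<bar>xi m k \<omega>\<bar> (level j))}
      \<le> exp (- 2 * ?x\<^sup>2 / (real (card (window j n)) * (level j)\<^sup>2))"
    unfolding trunc_mean_def
    by (rule prob_sum_min_abs_ge_le[OF xi_indep W(2) finite_window W(1) ident xi_rv level_pos powr_ge_zero])
  also have "\<dots> \<le> exp (- (scale j powr (\<eta>/2)))"
    using Hoeffding_exponent_ge[OF W(1)] by simp
  also have "\<dots> \<le> ?c / scale j powr (\<eta> * real exceed_count)"
    using exp_neg_le_power[of "scale j powr (\<eta>/2)" "2 * exceed_count"] exceed_count_ge_1
    by (simp add: power_divide powr_power powr_powr mult.commute)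
  also have "\<dots> \<le> ?c / scale j powr 2"
    using eta_exceed_count by (intro divide_left_mono scale_powr_mono) auto
  finally show ?thesis .
qed

lemma prob_large_window_sum:
  "prob (large_window_sum j) \<le> real (2 * exceed_count) ^ (2 * exceed_count) / scale j"
  unfolding large_window_sum_def
proof (rule prob_block_union_le)
  fix n :: nat assume "n \<in> {2 ^ j..<2 * 2 ^ j}"
  then have "n \<ge> 1"
    using one_le_power[of "2::nat" j] by simp
  then show "prob {\<omega>\<in>space M. real (card (window j n)) * trunc_mean j + scale j powr (1/2 - \<eta>/4)
      \<le> (\<Sum>m\<in>window j n. min \<bar>xi m k \<omega>\<bar> (level j))}
    \<le> real (2 * exceed_count) ^ (2 * exceed_count) / scale j powr 2"
    by (rule prob_window_sum_ge)
qed measurable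

lemma bad_event_sets:
  "many_late_old j \<in> events" "many_late_recent j \<in> events" "large_response j \<in> events"
  "large_window_sum j \<in> events" "many_exceed j \<in> events"
  unfolding many_late_old_def many_late_recent_def large_response_def large_window_sum_def
    many_exceed_def by measurable

lemma AE_eventually_not_bad: "AE \<omega> in M. eventually (\<lambda>j. \<omega> \<notin> bad j) sequentially"
proof -
  have BC: "AE \<omega> in M. eventually (\<lambda>j. \<omega> \<notin> E j) sequentially"
    if "\<And>j. E j \<in> events" "\<And>j. prob (E j) \<le> c / scale j powr b" "b > 0" for E c b
  proof (rule AE_eventually_not_in[OF that(1) summable_comparison_test'])
    show "summable (\<lambda>j. c / scale j powr b)"
      unfolding scale_def using that(3) by (rule summable_two_pow_powr)
  qed (use that(2) in simp)
  have "AE \<omega> in M. eventually (\<lambda>j. \<omega> \<notin> many_late_old j) sequentially"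
    using bad_event_sets prob_many_late_old eta_pos by (intro BC[of _ "2 * C" "3 * \<eta>"]) auto
  moreover have "AE \<omega> in M. eventually (\<lambda>j. \<omega> \<notin> many_late_recent j) sequentially"
    using bad_event_sets prob_many_late_recent eta_pos by (intro BC[of _ C \<eta>]) auto
  moreover have "AE \<omega> in M. eventually (\<lambda>j. \<omega> \<notin> large_response j) sequentially"
    using bad_event_sets prob_large_response eta_pos q_gt_2
    by (intro BC[of _ "2 * moment" "q * \<eta>"]) auto
  moreover have "AE \<omega> in M. eventually (\<lambda>j. \<omega> \<notin> large_window_sum j) sequentially"
    using bad_event_sets prob_large_window_sum abs_of_pos[OF scale_pos]
    by (intro BC[of _ "real (2 * exceed_count) ^ (2 * exceed_count)" 1]) auto
  moreover have "AE \<omega> in M. eventually (\<lambda>j. \<omega> \<notin> many_exceed j) sequentially"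
    using bad_event_sets prob_many_exceed abs_of_pos[OF scale_pos]
    by (intro BC[of _ "(2 * moment) ^ exceed_count" 1]) auto
  ultimately show ?thesis
    by eventually_elim (simp add: bad_def eventually_conj_iff)
qed

lemma abs_xi_le_cap:
  assumes "\<omega> \<in> space M" "\<omega> \<notin> large_response j" "m \<in> {1..2 * 2 ^ j}"
  shows "\<bar>xi m k \<omega>\<bar> \<le> cap j"
  using assms by (force simp: large_response_def not_less)

lemma cap_le: "cap j \<le> scale j powr (1/2 - \<eta>/4)"
  unfolding cap_def inverse_q_eq using eta_pos by (intro scale_powr_mono) auto

lemma sum_abs_xi_le_of_card:
  assumes "\<omega> \<in> space M" "\<omega> \<notin> large_response j" "A \<subseteq> {1..2 * 2 ^ j}"
    and "real (card A) \<le> scale j powr (3 * \<eta>)"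
  shows "(\<Sum>m\<in>A. \<bar>xi m k \<omega>\<bar>) \<le> scale j powr (1/2 - \<eta>/4)"
proof -
  have "(\<Sum>m\<in>A. \<bar>xi m k \<omega>\<bar>) \<le> real (card A) * cap j"
    using assms(3) abs_xi_le_cap[OF assms(1,2)] by (intro sum_bounded_above) auto
  also have "\<dots> \<le> scale j powr (3 * \<eta>) * cap j"
    using assms(4) by (intro mult_right_mono) (auto simp: cap_def)
  also have "\<dots> = scale j powr (1/2 - 4 * \<eta>)"
    unfolding cap_def powr_add[symmetric] inverse_q_eq by simp
  also have "\<dots> \<le> scale j powr (1/2 - \<eta>/4)"
    using eta_pos by (intro scale_powr_mono) auto
  finally show ?thesis .
qed

lemma sum_abs_xi_exceeds_le:
  assumes \<omega>: "\<omega> \<in> space M" "\<omega> \<notin> large_response j" "\<omega> \<notin> many_exceed j"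
    and n: "2 ^ j \<le> n" "n < 2 * 2 ^ j"
  shows "(\<Sum>m\<in>{m\<in>window j n. \<omega> \<in> exceeds j m}. \<bar>xi m k \<omega>\<bar>)
    \<le> real exceed_count * scale j powr (1/2 - \<eta>/4)"
proof -
  let ?E = "{m\<in>window j n. \<omega> \<in> exceeds j m}"
  have "\<bar>xi m k \<omega>\<bar> \<le> scale j powr (1/2 - \<eta>/4)" if "m \<in> ?E" for m
  proof -
    have "m \<in> {1..2 * 2 ^ j}"
      using that n window_subset[of j n] by auto
    then show ?thesis
      by (rule order.trans[OF abs_xi_le_cap[OF \<omega>(1,2)] cap_le])
  qed
  then have "(\<Sum>m\<in>?E. \<bar>xi m k \<omega>\<bar>) \<le> real (card ?E) * scale j powr (1/2 - \<eta>/4)"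
    by (rule sum_bounded_above)
  also have "\<dots> \<le> real exceed_count * scale j powr (1/2 - \<eta>/4)"
  proof -
    have "card ?E < exceed_count"
      using \<omega>(1,3) n unfolding many_exceed_def by force
    then show ?thesis
      by (intro mult_right_mono) auto
  qed
  finally show ?thesis .
qed

lemma sum_abs_xi_window_le:
  assumes \<omega>: "\<omega> \<in> space M" "\<omega> \<notin> large_response j" "\<omega> \<notin> large_window_sum j" "\<omega> \<notin> many_exceed j"
    and n: "2 ^ j \<le> n" "n < 2 * 2 ^ j"
  shows "(\<Sum>m\<in>window j n. \<bar>xi m k \<omega>\<bar>) \<le> (3 + 2 * moment + real exceed_count) * scale j powr (1/2 - \<eta>/4)"
proof -
  let ?x = "scale j powr (1/2 - \<eta>/4)"
  have "(\<Sum>m\<in>window j n. \<bar>xi m k \<omega>\<bar>)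
      \<le> (\<Sum>m\<in>window j n. min \<bar>xi m k \<omega>\<bar> (level j) + (if \<omega> \<in> exceeds j m then \<bar>xi m k \<omega>\<bar> else 0))"
    using \<omega>(1) level_pos[of j] by (intro sum_mono) (auto simp: exceeds_def)
  also have "\<dots> = (\<Sum>m\<in>window j n. min \<bar>xi m k \<omega>\<bar> (level j))
      + (\<Sum>m\<in>{m\<in>window j n. \<omega> \<in> exceeds j m}. \<bar>xi m k \<omega>\<bar>)"
    by (simp add: sum.distrib sum.inter_filter)
  also have "(\<Sum>m\<in>window j n. min \<bar>xi m k \<omega>\<bar> (level j)) \<le> real (card (window j n)) * trunc_mean j + ?x"
    using \<omega>(1,3) n unfolding large_window_sum_def by force
  also have "real (card (window j n)) * trunc_mean j \<le> 2 * scale j powr (1/2 - \<eta>) * (1 + moment)"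
    using card_window_le trunc_mean_bounds by (intro mult_mono) auto
  also have "\<dots> \<le> 2 * ?x * (1 + moment)"
    using moment_nonneg eta_pos by (intro mult_right_mono mult_left_mono scale_powr_mono) auto
  also have "(\<Sum>m\<in>{m\<in>window j n. \<omega> \<in> exceeds j m}. \<bar>xi m k \<omega>\<bar>) \<le> real exceed_count * ?x"
    using \<omega>(1,2,4) n by (rule sum_abs_xi_exceeds_le)
  finally show ?thesis
    by (simp add: algebra_simps)
qed

lemma sum_unobserved_le:
  fixes f :: "nat \<Rightarrow> real"
  assumes "\<omega> \<in> space M" "2 ^ j \<le> n" "n < 2 * 2 ^ j" "\<And>m. f m \<ge> 0"
  shows "sum f (unobserved t r n k \<omega>) \<le> sum f {m\<in>{1..2 ^ j}. \<omega> \<in> late_old j m}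
    + sum f {m\<in>{2 ^ j<..<2 * 2 ^ j}. \<omega> \<in> late_recent j m} + sum f (window j n)"
proof -
  let ?A = "{m\<in>{1..2 ^ j}. \<omega> \<in> late_old j m}"
  let ?B = "{m\<in>{2 ^ j<..<2 * 2 ^ j}. \<omega> \<in> late_recent j m}"
  have "unobserved t r n k \<omega> \<subseteq> ?A \<union> ?B \<union> window j n"
    using unobserved_subset[of t \<omega> "2 ^ j" n r k "width j"] t_incr assms(1-3)
    unfolding window_def late_old_def late_recent_def by auto
  then have "sum f (unobserved t r n k \<omega>) \<le> sum f (?A \<union> ?B \<union> window j n)"
    using assms(4) by (intro sum_mono2) auto
  also have "\<dots> \<le> sum f (?A \<union> ?B) + sum f (window j n)"
    using assms(4) by (intro sum_Un_le) auto
  also have "sum f (?A \<union> ?B) \<le> sum f ?A + sum f ?B"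
    using assms(4) by (intro sum_Un_le) auto
  finally show ?thesis
    by simp
qed

lemma card_late_le:
  assumes "\<omega> \<in> space M" "\<omega> \<notin> bad j"
  shows "real (card {m\<in>{1..2 ^ j}. \<omega> \<in> late_old j m}) \<le> scale j powr (3 * \<eta>)"
    and "real (card {m\<in>{2 ^ j<..<2 * 2 ^ j}. \<omega> \<in> late_recent j m}) \<le> scale j powr (3 * \<eta>)"
  using assms unfolding bad_def many_late_old_def many_late_recent_def by auto

lemma abs_S_tot_minus_S_obs_le:
  assumes \<omega>: "\<omega> \<in> space M" "\<omega> \<notin> bad j" and n: "2 ^ j \<le> n" "n < 2 * 2 ^ j"
  shows "\<bar>S_tot X xi n k \<omega> - S_obs X xi t r n k \<omega>\<bar>
      \<le> (5 + 2 * moment + real exceed_count) * scale j powr (1/2 - \<eta>/4)"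
proof -
  let ?x = "scale j powr (1/2 - \<eta>/4)"
  have "\<bar>X m k \<omega> * xi m k \<omega>\<bar> \<le> \<bar>xi m k \<omega>\<bar>" if "m \<in> unobserved t r n k \<omega>" for m
    using that X_01[of m \<omega>] \<omega>(1) by (auto simp: unobserved_def abs_mult)
  then have "\<bar>S_tot X xi n k \<omega> - S_obs X xi t r n k \<omega>\<bar> \<le> (\<Sum>m\<in>unobserved t r n k \<omega>. \<bar>xi m k \<omega>\<bar>)"
    unfolding S_tot_minus_S_obs by (intro order.trans[OF sum_abs] sum_mono)
  also have "\<dots> \<le> (\<Sum>m\<in>{m\<in>{1..2 ^ j}. \<omega> \<in> late_old j m}. \<bar>xi m k \<omega>\<bar>)
      + (\<Sum>m\<in>{m\<in>{2 ^ j<..<2 * 2 ^ j}. \<omega> \<in> late_recent j m}. \<bar>xi m k \<omega>\<bar>)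
      + (\<Sum>m\<in>window j n. \<bar>xi m k \<omega>\<bar>)"
    using \<omega>(1) n by (rule sum_unobserved_le) simp
  also have "\<dots> \<le> ?x + ?x + (3 + 2 * moment + real exceed_count) * ?x"
    using \<omega> n card_late_le[OF \<omega>]
    by (intro add_mono sum_abs_xi_le_of_card sum_abs_xi_window_le) (auto simp: bad_def)
  finally show ?thesis
    by (simp add: algebra_simps)
qed

lemma abs_N_tot_minus_N_obs_le:
  assumes \<omega>: "\<omega> \<in> space M" "\<omega> \<notin> bad j" and n: "2 ^ j \<le> n" "n < 2 * 2 ^ j"
  shows "\<bar>N_tot X n k \<omega> - N_obs X t r n k \<omega>\<bar> \<le> 4 * scale j powr (1/2 - \<eta>/4)"
proof -
  let ?x = "scale j powr (1/2 - \<eta>/4)"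
  have "\<bar>X m k \<omega>\<bar> \<le> 1" if "m \<in> unobserved t r n k \<omega>" for m
    using that X_01[of m \<omega>] \<omega>(1) by (auto simp: unobserved_def)
  then have "\<bar>N_tot X n k \<omega> - N_obs X t r n k \<omega>\<bar> \<le> (\<Sum>m\<in>unobserved t r n k \<omega>. 1)"
    unfolding N_tot_minus_N_obs by (intro order.trans[OF sum_abs] sum_mono)
  also have "\<dots> \<le> real (card {m\<in>{1..2 ^ j}. \<omega> \<in> late_old j m})
      + real (card {m\<in>{2 ^ j<..<2 * 2 ^ j}. \<omega> \<in> late_recent j m}) + real (card (window j n))"
    using sum_unobserved_le[OF \<omega>(1) n, of "\<lambda>_. 1"] by simp
  also have "\<dots> \<le> ?x + ?x + 2 * ?x"
  proof -
    have "scale j powr (3 * \<eta>) \<le> ?x" "scale j powr (1/2 - \<eta>) \<le> ?x"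
      using eta_pos eta_less by (auto intro: scale_powr_mono)
    then show ?thesis
      using card_late_le[OF \<omega>] card_window_le[of j n] by simp
  qed
  finally show ?thesis
    by simp
qed

lemma unobserved_smallo:
  "(AE \<omega> in M. (\<lambda>n. S_tot X xi n k \<omega> - S_obs X xi t r n k \<omega>) \<in> o(\<lambda>n. real n powr (1/2 - \<eta>/8))) \<and>
   (AE \<omega> in M. (\<lambda>n. N_tot X n k \<omega> - N_obs X t r n k \<omega>) \<in> o(\<lambda>n. real n powr (1/2 - \<eta>/8)))"
proof -
  have rate: "0 \<le> 1/2 - \<eta>/4" "1/2 - \<eta>/4 < 1/2 - \<eta>/8"
    using eta_pos eta_less by auto
  have good: "AE \<omega> in M. \<omega> \<in> space M \<and> eventually (\<lambda>j. \<omega> \<notin> bad j) sequentially"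
    using AE_eventually_not_bad AE_space by eventually_elim auto
  have "AE \<omega> in M. (\<lambda>n. S_tot X xi n k \<omega> - S_obs X xi t r n k \<omega>) \<in> o(\<lambda>n. real n powr (1/2 - \<eta>/8))"
    using good
  proof eventually_elim
    case (elim \<omega>)
    then show ?case
      using moment_nonneg abs_S_tot_minus_S_obs_le[of \<omega>] unfolding scale_def
      by (intro smallo_of_dyadic_bound[where c = "5 + 2 * moment + real exceed_count", OF _ rate(1) _ rate(2)])
        (auto elim!: eventually_mono)
  qed
  moreover have "AE \<omega> in M. (\<lambda>n. N_tot X n k \<omega> - N_obs X t r n k \<omega>) \<in> o(\<lambda>n. real n powr (1/2 - \<eta>/8))"
    using good
  proof eventually_elim
    case (elim \<omega>)
    then show ?case
      using abs_N_tot_minus_N_obs_le[of \<omega>] unfolding scale_def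
      by (intro smallo_of_dyadic_bound[where c = 4, OF _ rate(1) _ rate(2)]) (auto elim!: eventually_mono)
  qed
  ultimately show ?thesis ..
qed

end

theorem mainTheorem3:
  fixes M :: "'a measure" and K :: nat
    and X :: "nat \<Rightarrow> nat \<Rightarrow> 'a \<Rightarrow> real"
    and xi :: "nat \<Rightarrow> nat \<Rightarrow> 'a \<Rightarrow> real"
    and t :: "nat \<Rightarrow> 'a \<Rightarrow> real"
    and r :: "nat \<Rightarrow> nat \<Rightarrow> 'a \<Rightarrow> real"
    and \<delta> C \<gamma> :: real
  assumes P: "prob_space M"
    and K: "K \<ge> 1"
    and X_rv: "\<And>m k. X m k \<in> borel_measurable M"
    and X_01: "\<And>m k \<omega>. m \<ge> 1 \<Longrightarrow> k \<in> {1..K} \<Longrightarrow> \<omega> \<in> space M \<Longrightarrow> X m k \<omega> \<in> {0, 1}"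
    and X_one: "\<And>m \<omega>. m \<ge> 1 \<Longrightarrow> \<omega> \<in> space M \<Longrightarrow> (\<exists>!k. k \<in> {1..K} \<and> X m k \<omega> = 1)"
    and xi_rv: "\<And>m k. xi m k \<in> borel_measurable M"
    and xi_indep: "\<And>k. k \<in> {1..K} \<Longrightarrow>
          prob_space.indep_vars M (\<lambda>_. borel) (\<lambda>m. xi m k) {1..}"
    and xi_ident: "\<And>m k. m \<ge> 1 \<Longrightarrow> k \<in> {1..K} \<Longrightarrow>
          distr M borel (xi m k) = distr M borel (xi 1 k)"
    and \<delta>_pos: "\<delta> > 0"
    and xi_moment: "\<And>k. k \<in> {1..K} \<Longrightarrow>
          integrable M (\<lambda>\<omega>. \<bar>xi 1 k \<omega>\<bar> powr (2 + \<delta>))"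
    and t_rv: "\<And>m. t m \<in> borel_measurable M"
    and t_incr: "\<And>m \<omega>. m \<ge> 1 \<Longrightarrow> \<omega> \<in> space M \<Longrightarrow> t m \<omega> \<le> t (Suc m) \<omega>"
    and t_indep: "prob_space.indep_vars M (\<lambda>_. borel) (\<lambda>m \<omega>. t (Suc m) \<omega> - t m \<omega>) {1..}"
    and r_rv: "\<And>m k. r m k \<in> borel_measurable M"
    and r_indep: "\<And>k. k \<in> {1..K} \<Longrightarrow>
          prob_space.indep_vars M (\<lambda>_. borel) (\<lambda>m. r m k) {1..}"
    and indep_past: "\<And>n. n \<ge> 1 \<Longrightarrow>
          prob_space.indep_var M
            (PiM ({n..} \<times> {0..K}) (\<lambda>_. borel))
            (\<lambda>\<omega>. \<lambda>p\<in>{n..} \<times> {0..K}.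
               if snd p = 0 then t (Suc (fst p)) \<omega> - t (fst p) \<omega> else r (fst p) (snd p) \<omega>)
            (PiM ({1..n} \<times> {1..K}) (\<lambda>_. borel))
            (\<lambda>\<omega>. \<lambda>p\<in>{1..n} \<times> {1..K}. X (fst p) (snd p) \<omega>)"
    and C_pos: "C > 0"
    and \<gamma>: "\<gamma> \<ge> 2"
    and mu_bound: "\<And>m l k. m \<ge> 1 \<Longrightarrow> l \<ge> 1 \<Longrightarrow> k \<in> {1..K} \<Longrightarrow>
          measure M {\<omega> \<in> space M. r m k \<omega> \<ge> t (m + l) \<omega> - t m \<omega>} \<le> C * real l powr (- \<gamma>)"
  shows "\<exists>\<delta>0. 0 < \<delta>0 \<and> \<delta>0 < 1/2 - 1/(2 + \<delta>) \<and>
     (\<forall>k\<in>{1..K}.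
        (AE \<omega> in M. (\<lambda>n. S_tot X xi n k \<omega> - S_obs X xi t r n k \<omega>)
                        \<in> o(\<lambda>n. real n powr (1/2 - \<delta>0))) \<and>
        (AE \<omega> in M. (\<lambda>n. N_tot X n k \<omega> - N_obs X t r n k \<omega>)
                        \<in> o(\<lambda>n. real n powr (1/2 - \<delta>0))))"
proof -
  define \<delta>0 where "\<delta>0 = (1/2 - 1/(2 + \<delta>)) / 64"
  have "(AE \<omega> in M. (\<lambda>n. S_tot X xi n k \<omega> - S_obs X xi t r n k \<omega>) \<in> o(\<lambda>n. real n powr (1/2 - \<delta>0))) \<and>
        (AE \<omega> in M. (\<lambda>n. N_tot X n k \<omega> - N_obs X t r n k \<omega>) \<in> o(\<lambda>n. real n powr (1/2 - \<delta>0)))"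
    if k: "k \<in> {1..K}" for k
  proof -
    interpret delayed_response M k X xi t r "2 + \<delta>" C \<gamma>
    proof (intro delayed_response.intro[OF P] delayed_response_axioms.intro)
      show "X m k \<omega> \<in> {0, 1}" if "m \<ge> 1" "\<omega> \<in> space M" for m \<omega>
        using that k by (intro X_01)
      show "distr M borel (xi m k) = distr M borel (xi 1 k)" if "m \<ge> 1" for m
        using that k by (intro xi_ident)
    qed (use k \<delta>_pos \<gamma> xi_rv t_rv r_rv t_incr xi_indep[OF k] xi_moment[OF k] in \<open>auto intro: mu_bound\<close>)
    have "\<eta> / 8 = \<delta>0"
      unfolding \<eta>_def \<delta>0_def by simp
    then show ?thesis
      using unobserved_smallo by simp
  qed
  moreover have "1/(2 + \<delta>) < 1/2"
    using \<delta>_pos by (simp add: field_simps)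
  then have "0 < \<delta>0" "\<delta>0 < 1/2 - 1/(2 + \<delta>)"
    unfolding \<delta>0_def by simp_all
  ultimately show ?thesis
    by blast
qed

end
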